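(* Let $t\geq 4$ be an even integer, let $k\geq 0$ be an integer and let $d$ be an even integer with $0\leq d<t$. Then the multiset $\{1,2^b,t^{tk+d}\}$ admits a special linear realization of type $2$ for every $b\geq t-1$ if $d\equiv 2\pmod 4$ and $t\equiv 2\pmod 4$, and for every $b\geq t-2$ otherwise.
   Context: $\{1,2^b,t^{m}\}$ is the multiset with one $1$, $b$ copies of $2$ and $m$ copies of $t$. For a multiset $L$ of positive integers with $|L|=v-1$, each at most $v-1$, a linear realization of $L$ is a Hamiltonian path $[x_0,\dots,x_{v-1}]$ of the complete graph on $\{0,\dots,v-1\}$ such that the multiset $\{|x_i-x_{i+1}|\}$ equals $L$. It is special of type $2$ if its endpoints are $0$ and $1$. *)

theory Defs
  imports Main "HOL-Library.Multiset"
begin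

definition path_lengths :: "nat list \<Rightarrow> nat multiset" where
  "path_lengths xs = mset (map (\<lambda>i. nat \<bar>int (xs ! i) - int (xs ! Suc i)\<bar>) [0..<length xs - 1])"

text \<open>A linear realization of L on {0,...,v-1}: a Hamiltonian path of K_v
  (a list enumerating {0..<v} without repetition) whose edge lengths form L.\<close>
definition linear_realization :: "nat \<Rightarrow> nat multiset \<Rightarrow> nat list \<Rightarrow> bool" where
  "linear_realization v L xs \<longleftrightarrow>
     size L = v - 1 \<and> (\<forall>l\<in>#L. 0 < l \<and> l \<le> v - 1) \<and>
     distinct xs \<and> set xs = {0..<v} \<and> path_lengths xs = L"

definition special_linear_realization_2 :: "nat \<Rightarrow> nat multiset \<Rightarrow> nat list \<Rightarrow> bool" where
  "special_linear_realization_2 v L xs \<longleftrightarrow>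
     linear_realization v L xs \<and> {hd xs, last xs} = {0, 1}"

definition L12t :: "nat \<Rightarrow> nat \<Rightarrow> nat \<Rightarrow> nat multiset" where
  "L12t b t m = {#1#} + replicate_mset b 2 + replicate_mset m t"

end

theory Submission
  imports Defs
begin

text \<open>
  Write \<open>t = 2s\<close> and \<open>d = 2j\<close>. On the even and on the odd vertices separately, halving
  turns edges of length 2 and \<open>t\<close> into edges of length 1 and \<open>s\<close>. A Hamiltonian path of
  \<open>{0..<n}\<close> from 0 with exactly \<open>s - 1\<close> unit steps, all other steps being \<open>s\<close>, comes from
  arranging the numbers in columns by their residue mod \<open>s\<close> and snaking through the columns,
  consecutive columns being joined by a unit step at the top or at the bottom. Two such paths,
  doubled (the second one also shifted by 1 and reversed) and joined by an edge of length 1, give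
  a path from 0 to 1 realizing \<open>{1, 2^(2s-2), t^m}\<close>. When \<open>s\<close> and \<open>j\<close> are both odd, the
  parities of the joins obstruct this; paths on \<open>n + 1\<close> and \<open>n\<close> points with \<open>s - 1\<close> and
  \<open>s\<close> unit steps are combined instead, giving \<open>2^(2s-1)\<close>. Each further 2 is added by
  reversing the path, shifting it by 1 and prepending 0.
\<close>

definition absdiff :: "nat \<Rightarrow> nat \<Rightarrow> nat" where
  "absdiff x y = nat \<bar>int x - int y\<bar>"

lemma absdiff_commute: "absdiff x y = absdiff y x"
  by (simp add: absdiff_def)

lemma absdiff_Suc [simp]: "absdiff (Suc x) x = 1" "absdiff x (Suc x) = 1"
  by (simp_all add: absdiff_def)

lemma path_lengths_Nil [simp]: "path_lengths [] = {#}"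
  by (simp add: path_lengths_def)

lemma path_lengths_singleton [simp]: "path_lengths [x] = {#}"
  by (simp add: path_lengths_def)

lemma path_lengths_Cons_Cons [simp]:
  "path_lengths (x # y # xs) = add_mset (absdiff x y) (path_lengths (y # xs))"
proof -
  have "[0..<length (x # y # xs) - 1] = 0 # map Suc [0..<length (y # xs) - 1]"
    by (simp add: upt_conv_Cons map_Suc_upt del: upt_Suc)
  then show ?thesis
    by (simp add: path_lengths_def absdiff_def comp_def)
qed

lemma path_lengths_Cons:
  "xs \<noteq> [] \<Longrightarrow> path_lengths (x # xs) = add_mset (absdiff x (hd xs)) (path_lengths xs)"
  by (cases xs) auto

lemma path_lengths_append:
  "xs \<noteq> [] \<Longrightarrow> ys \<noteq> [] \<Longrightarrow>
    path_lengths (xs @ ys) = path_lengths xs + add_mset (absdiff (last xs) (hd ys)) (path_lengths ys)"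
  by (induction xs rule: induct_list012) (auto simp: path_lengths_Cons)

lemma path_lengths_snoc:
  "xs \<noteq> [] \<Longrightarrow> path_lengths (xs @ [y]) = add_mset (absdiff (last xs) y) (path_lengths xs)"
  by (simp add: path_lengths_append)

lemma path_lengths_rev [simp]: "path_lengths (rev xs) = path_lengths xs"
proof (induction xs rule: rev_induct)
  case (snoc x xs)
  then show ?case
    by (cases "xs = []") (auto simp: path_lengths_Cons path_lengths_snoc hd_rev absdiff_commute)
qed simp

lemma path_lengths_map_affine:
  "path_lengths (map (\<lambda>x. a * x + c) xs) = image_mset ((*) a) (path_lengths xs)"
proof (induction xs rule: induct_list012)
  case (3 x y zs)
  have "\<bar>int (a * x + c) - int (a * y + c)\<bar> = int a * \<bar>int x - int y\<bar>"
    by (simp add: abs_mult flip: right_diff_distrib)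
  then have "absdiff (a * x + c) (a * y + c) = a * absdiff x y"
    by (simp add: absdiff_def nat_mult_distrib)
  with 3 show ?case by simp
qed simp_all

lemma path_lengths_map_Suc [simp]: "path_lengths (map Suc xs) = path_lengths xs"
proof -
  have "(*) (1::nat) = (\<lambda>x. x)" by auto
  then show ?thesis using path_lengths_map_affine[of 1 1 xs] by simp
qed

lemma path_lengths_upt: "path_lengths [a..<b] = replicate_mset (b - a - 1) 1"
proof (induction b)
  case (Suc b)
  show ?case
  proof (cases "a < b")
    case True
    then have "b - a = Suc (b - Suc a)" by simp
    with True Suc show ?thesis by (simp add: path_lengths_snoc absdiff_def)
  qed simp
qed simp

lemma size_path_lengths: "size (path_lengths xs) = length xs - 1"
  by (simp add: path_lengths_def)

lemma in_path_lengthsE: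
  assumes "l \<in># path_lengths xs"
  obtains i where "Suc i < length xs" "l = absdiff (xs ! i) (xs ! Suc i)"
  using assms that by (auto simp: path_lengths_def absdiff_def less_diff_conv)

lemma replicate_mset_add:
  "replicate_mset (m + n) x = replicate_mset m x + replicate_mset n x"
  by (induction m) auto

lemma replicate_mset_eq_add_mset:
  "0 < n \<Longrightarrow> replicate_mset n x = add_mset x (replicate_mset (n - 1) x)"
  by (cases n) auto

lemma successively_upt:
  "(\<And>i. a \<le> i \<Longrightarrow> Suc i < b \<Longrightarrow> P i (Suc i)) \<Longrightarrow> successively P [a..<b]"
  by (simp add: successively_conv_nth)

lemma successively_0_Cons_rev_upt:
  assumes "1 < n" and "P 0 (n - 1)" and "\<And>i. 0 < i \<Longrightarrow> Suc i < n \<Longrightarrow> P (Suc i) i"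
  shows "successively P (0 # rev [1..<n])"
proof -
  have "successively (\<lambda>x y. P y x) [1..<n]"
    using assms(3) by (intro successively_upt) simp
  then show ?thesis
    using assms(1,2) by (simp add: successively_Cons hd_rev)
qed

definition ham_path_from_0 :: "nat \<Rightarrow> nat multiset \<Rightarrow> nat list \<Rightarrow> bool" where
  "ham_path_from_0 n L xs \<longleftrightarrow>
     distinct xs \<and> set xs = {..<n} \<and> xs \<noteq> [] \<and> hd xs = 0 \<and> path_lengths xs = L"

definition ham_path_0_1 :: "nat \<Rightarrow> nat multiset \<Rightarrow> nat list \<Rightarrow> bool" where
  "ham_path_0_1 n L xs \<longleftrightarrow> ham_path_from_0 n L xs \<and> last xs = 1"

lemma length_ham_path_from_0: "ham_path_from_0 n L xs \<Longrightarrow> length xs = n"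
  unfolding ham_path_from_0_def by (metis card_lessThan distinct_card)

lemma special_linear_realization_2_if_ham_path_0_1:
  assumes "ham_path_0_1 v L xs"
  shows "special_linear_realization_2 v L xs"
proof -
  have xs: "distinct xs" "set xs = {..<v}" "xs \<noteq> []" "hd xs = 0" "last xs = 1" "path_lengths xs = L"
    using assms by (auto simp: ham_path_0_1_def ham_path_from_0_def)
  have "length xs = v"
    using assms by (auto simp: ham_path_0_1_def dest: length_ham_path_from_0)
  then have "size L = v - 1"
    using xs(6) size_path_lengths[of xs] by simp
  moreover have "0 < l \<and> l \<le> v - 1" if "l \<in># L" for l
  proof -
    from that obtain i where i: "Suc i < length xs" "l = absdiff (xs ! i) (xs ! Suc i)"
      unfolding xs(6)[symmetric] by (rule in_path_lengthsE)
    have "xs ! i \<noteq> xs ! Suc i"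
      using xs(1) i(1) by (simp add: nth_eq_iff_index_eq)
    moreover have "xs ! i < v" "xs ! Suc i < v"
      using xs(2) i(1) nth_mem[of i xs] nth_mem[of "Suc i" xs] by auto
    ultimately show ?thesis using i(2) by (auto simp: absdiff_def)
  qed
  ultimately show ?thesis
    using xs by (auto simp: special_linear_realization_2_def linear_realization_def atLeast0LessThan)
qed

lemma lessThan_eq_doubles_Un_odds:
  assumes "n \<le> m" "m \<le> Suc n"
  shows "{..<m + n} = (*) 2 ` {..<m} \<union> (\<lambda>x. 2 * x + 1) ` {..<n}"
proof (intro set_eqI iffI)
  fix x assume "x \<in> {..<m + n}"
  then have x: "x < m + n" by simp
  show "x \<in> (*) 2 ` {..<m} \<union> (\<lambda>x. 2 * x + 1) ` {..<n}"
  proof (cases "even x")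
    case True
    then obtain i where "x = 2 * i" by blast
    moreover have "i < m" using x assms \<open>x = 2 * i\<close> by linarith
    ultimately show ?thesis by auto
  next
    case False
    then obtain i where "x = 2 * i + 1" by (blast elim: oddE)
    moreover have "i < n" using x assms \<open>x = 2 * i + 1\<close> by linarith
    ultimately show ?thesis by auto
  qed
next
  fix x assume "x \<in> (*) 2 ` {..<m} \<union> (\<lambda>x. 2 * x + 1) ` {..<n}"
  then consider i where "i < m" "x = 2 * i" | i where "i < n" "x = 2 * i + 1"
    by auto
  then show "x \<in> {..<m + n}"
    by cases (use assms in auto)
qed

lemma ham_path_0_1_interleave:
  assumes P: "ham_path_from_0 m L P" and Q: "ham_path_from_0 n M Q"
    and mn: "n \<le> m" "m \<le> Suc n"
    and link: "absdiff (2 * last P) (2 * last Q + 1) = 1"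
  shows "ham_path_0_1 (m + n) (add_mset 1 (image_mset ((*) 2) (L + M)))
           (map ((*) 2) P @ map (\<lambda>x. 2 * x + 1) (rev Q))"
proof -
  let ?A = "map ((*) 2) P" and ?B = "map (\<lambda>x. 2 * x + 1) (rev Q)"
  have P': "distinct P" "set P = {..<m}" "P \<noteq> []" "hd P = 0" "path_lengths P = L"
    and Q': "distinct Q" "set Q = {..<n}" "Q \<noteq> []" "hd Q = 0" "path_lengths Q = M"
    using P Q by (auto simp: ham_path_from_0_def)
  have "path_lengths (?A @ ?B) = path_lengths ?A + add_mset 1 (path_lengths ?B)"
    using P' Q' link by (simp add: path_lengths_append last_map hd_map hd_rev)
  also have "\<dots> = add_mset 1 (image_mset ((*) 2) (L + M))"
    using path_lengths_map_affine[of 2 0 P] path_lengths_map_affine[of 2 1 "rev Q"] P'(5) Q'(5)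
    by simp
  finally have lengths: "path_lengths (?A @ ?B) = add_mset 1 (image_mset ((*) 2) (L + M))" .
  have "\<forall>x\<in>set ?A. even x" "\<forall>x\<in>set ?B. odd x"
    by auto
  then have "set ?A \<inter> set ?B = {}"
    by blast
  then have "distinct (?A @ ?B)"
    using P'(1) Q'(1) by (simp add: distinct_map inj_on_def)
  moreover have "set (?A @ ?B) = {..<m + n}"
    using P'(2) Q'(2) lessThan_eq_doubles_Un_odds[OF mn] by simp
  moreover have "hd (?A @ ?B) = 0" "last (?A @ ?B) = 1"
    using P' Q' by (simp_all add: hd_map last_map last_rev)
  ultimately show ?thesis
    using lengths P' by (simp add: ham_path_0_1_def ham_path_from_0_def)
qed

lemma ham_path_0_1_Suc:
  assumes "ham_path_0_1 n L xs"
  shows "ham_path_0_1 (Suc n) (add_mset 2 L) (0 # map Suc (rev xs))"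
proof -
  have xs: "distinct xs" "set xs = {..<n}" "xs \<noteq> []" "hd xs = 0" "last xs = 1" "path_lengths xs = L"
    using assms by (auto simp: ham_path_0_1_def ham_path_from_0_def)
  have "path_lengths (0 # map Suc (rev xs)) = add_mset 2 L"
    using xs by (simp add: path_lengths_Cons hd_map hd_rev absdiff_def)
  moreover have "set (0 # map Suc (rev xs)) = {..<Suc n}"
    using xs(2) by (auto simp: lessThan_Suc_eq_insert_0)
  ultimately show ?thesis
    using xs by (simp add: ham_path_0_1_def ham_path_from_0_def distinct_map last_map last_rev)
qed

lemma ham_path_0_1_add_twos:
  assumes "ham_path_0_1 n L xs"
  shows "\<exists>ys. ham_path_0_1 (n + e) (L + replicate_mset e 2) ys"
proof (induction e)
  case 0
  then show ?case using assms by (intro exI[of _ xs]) simp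
next
  case (Suc e)
  then obtain ys where "ham_path_0_1 (n + e) (L + replicate_mset e 2) ys" ..
  then have "ham_path_0_1 (Suc (n + e)) (add_mset 2 (L + replicate_mset e 2)) (0 # map Suc (rev ys))"
    by (rule ham_path_0_1_Suc)
  then show ?case by auto
qed

lemma ham_path_0_1_L12t_mono:
  assumes "ham_path_0_1 (b' + m + 2) (L12t b' t m) xs" and "b' \<le> b"
  shows "\<exists>ys. ham_path_0_1 (b + m + 2) (L12t b t m) ys"
proof -
  obtain e where "b = b' + e" using assms(2) by (auto dest: le_Suc_ex)
  then have "b + m + 2 = b' + m + 2 + e" and "L12t b t m = L12t b' t m + replicate_mset e 2"
    by (simp_all add: L12t_def replicate_mset_add ac_simps)
  then show ?thesis using ham_path_0_1_add_twos[OF assms(1)] by metis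
qed

text \<open>Column \<open>c\<close> holds the numbers \<open>c, c + s, c + 2s, \<dots>\<close> below \<open>s q + j\<close>.\<close>

locale residue_columns =
  fixes s q j :: nat
  assumes two_le_s: "2 \<le> s" and q_pos: "0 < q" and j_less_s: "j < s"
begin

definition height :: "nat \<Rightarrow> nat" where
  "height c = (if c < j then Suc q else q)"

definition column :: "nat \<Rightarrow> nat list" where
  "column c = map (\<lambda>i. s * i + c) [0..<height c]"

definition run :: "(nat \<Rightarrow> bool) \<Rightarrow> nat \<Rightarrow> nat list" where
  "run up c = (if up c then column c else rev (column c))"

definition snake :: "(nat \<Rightarrow> bool) \<Rightarrow> nat list \<Rightarrow> nat list" where
  "snake up cs = concat (map (run up) cs)"

definition linked :: "(nat \<Rightarrow> bool) \<Rightarrow> nat \<Rightarrow> nat \<Rightarrow> bool" where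
  "linked up a b \<longleftrightarrow> absdiff (last (run up a)) (hd (run up b)) = 1"

lemma height_pos: "0 < height c"
  using q_pos by (simp add: height_def)

lemma run_ne [simp]: "run up c \<noteq> []"
  using height_pos[of c] by (simp add: run_def column_def)

lemma hd_run: "hd (run up c) = (if up c then c else c + s * (height c - 1))"
  using height_pos[of c] by (simp add: run_def column_def hd_map hd_rev last_map)

lemma last_run: "last (run up c) = (if up c then c + s * (height c - 1) else c)"
  using height_pos[of c] by (simp add: run_def column_def hd_map last_rev last_map)

lemma path_lengths_run: "path_lengths (run up c) = replicate_mset (height c - 1) s"
  by (simp add: run_def column_def path_lengths_map_affine path_lengths_upt)

lemma distinct_run: "distinct (run up c)"
  using two_le_s by (simp add: run_def column_def distinct_map inj_on_def)

lemma less_iff_less_height: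
  assumes "c < s"
  shows "s * i + c < s * q + j \<longleftrightarrow> i < height c"
proof (cases "c < j")
  case True
  have "s * i + c < s * q + j \<longleftrightarrow> i < Suc q"
  proof
    assume "i < Suc q"
    then have "s * i \<le> s * q" by simp
    then show "s * i + c < s * q + j" using True by linarith
  next
    assume "s * i + c < s * q + j"
    then have "s * i < s * Suc q" using j_less_s by simp
    then show "i < Suc q" by (simp only: mult_less_cancel1)
  qed
  with True show ?thesis by (simp add: height_def)
next
  case False
  have "s * i + c < s * q + j \<longleftrightarrow> i < q"
  proof
    assume "i < q"
    then have "s * Suc i \<le> s * q" by (intro mult_le_mono2) simp
    then show "s * i + c < s * q + j" using assms by simp
  next
    assume "s * i + c < s * q + j"
    then have "s * i < s * q" using False by linarith
    then show "i < q" by (simp only: mult_less_cancel1)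
  qed
  with False show ?thesis by (simp add: height_def)
qed

lemma set_run:
  assumes "c < s"
  shows "set (run up c) = {x. x < s * q + j \<and> x mod s = c}"
proof -
  have "x \<in> set (column c) \<longleftrightarrow> x < s * q + j \<and> x mod s = c" for x
  proof -
    have "x \<in> set (column c) \<longleftrightarrow> (\<exists>i. x = s * i + c \<and> s * i + c < s * q + j)"
      using assms by (auto simp: column_def less_iff_less_height)
    also have "\<dots> \<longleftrightarrow> x < s * q + j \<and> x mod s = c"
      using assms by (metis div_mult_mod_eq mod_mult_self3 mod_less mult.commute)
    finally show ?thesis .
  qed
  then show ?thesis by (auto simp: run_def)
qed

lemma snake_Nil [simp]: "snake up [] = []"
  by (simp add: snake_def)

lemma snake_Cons [simp]: "snake up (c # cs) = run up c @ snake up cs"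
  by (simp add: snake_def)

lemma snake_eq_Nil_iff [simp]: "snake up cs = [] \<longleftrightarrow> cs = []"
  by (cases cs) auto

lemma set_snake:
  "set cs \<subseteq> {..<s} \<Longrightarrow> set (snake up cs) = {x. x < s * q + j \<and> x mod s \<in> set cs}"
  by (induction cs) (auto simp: set_run)

lemma set_snake_all: "set cs = {..<s} \<Longrightarrow> set (snake up cs) = {..<s * q + j}"
  using two_le_s set_snake[of cs up] by auto

lemma distinct_snake: "distinct cs \<Longrightarrow> set cs \<subseteq> {..<s} \<Longrightarrow> distinct (snake up cs)"
  by (induction cs) (auto simp: distinct_run set_run set_snake)

lemma hd_snake: "cs \<noteq> [] \<Longrightarrow> hd (snake up cs) = hd (run up (hd cs))"
  by (cases cs) auto

lemma last_snake: "cs \<noteq> [] \<Longrightarrow> last (snake up cs) = last (run up (last cs))"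
  by (induction cs rule: induct_list012) auto

lemma path_lengths_snake:
  "successively (linked up) cs \<Longrightarrow>
     path_lengths (snake up cs) =
       replicate_mset (length cs - 1) 1 + replicate_mset (\<Sum>c\<leftarrow>cs. height c - 1) s"
proof (induction cs rule: induct_list012)
  case (3 c d cs)
  then have "path_lengths (snake up (c # d # cs)) =
      path_lengths (run up c) + add_mset 1 (path_lengths (snake up (d # cs)))"
    by (simp add: path_lengths_append hd_snake linked_def)
  with 3 show ?case by (simp add: path_lengths_run replicate_mset_add)
qed (simp_all add: path_lengths_run)

lemma ham_path_snake:
  assumes cs: "distinct cs" "set cs = {..<s}" "hd cs = 0"
    and up: "up 0" and linked: "successively (linked up) cs"
  shows "ham_path_from_0 (s * q + j)
           (replicate_mset (s - 1) 1 + replicate_mset (s * q + j - s) s) (snake up cs)"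
proof -
  have "length cs = s"
    using cs(1,2) distinct_card[of cs] by simp
  then have "cs \<noteq> []"
    using two_le_s by auto
  have set: "set (snake up cs) = {..<s * q + j}"
    using cs(2) by (rule set_snake_all)
  have distinct: "distinct (snake up cs)"
    using cs by (simp add: distinct_snake)
  have "length (snake up cs) = s * q + j"
    using distinct_card[OF distinct] set by simp
  define y where "y = (\<Sum>c\<leftarrow>cs. height c - 1)"
  have lengths: "path_lengths (snake up cs) = replicate_mset (s - 1) 1 + replicate_mset y s"
    using path_lengths_snake[OF linked] \<open>length cs = s\<close> by (simp add: y_def)
  then have "y = s * q + j - s"
    using size_path_lengths[of "snake up cs"] \<open>length (snake up cs) = s * q + j\<close> two_le_s
    by simp
  moreover have "hd (snake up cs) = 0"
    using cs(3) up \<open>cs \<noteq> []\<close> by (simp add: hd_snake hd_run)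
  moreover have "snake up cs \<noteq> []"
    using \<open>length (snake up cs) = s * q + j\<close> two_le_s q_pos by auto
  ultimately show ?thesis
    using set distinct lengths by (simp add: ham_path_from_0_def)
qed

lemma linked_top:
  assumes "up a" "\<not> up b" "b = Suc a \<or> a = Suc b" "j \<noteq> max a b"
  shows "linked up a b"
proof -
  have "height a = height b"
    using assms(3,4) by (auto simp: height_def)
  then show ?thesis
    using assms(1-3) by (auto simp: linked_def hd_run last_run absdiff_def)
qed

lemma linked_bottom:
  assumes "\<not> up a" "up b" "b = Suc a \<or> a = Suc b"
  shows "linked up a b"
  using assms by (auto simp: linked_def hd_run last_run absdiff_def)

lemma linked_wrap:
  assumes "up 0" "\<not> up (s - 1)" "0 < j"
  shows "linked up 0 (s - 1)"
proof -
  have "height 0 = Suc q" "height (s - 1) = q"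
    using assms(3) j_less_s by (auto simp: height_def)
  moreover have "s - 1 + s * (q - 1) + 1 = s * q"
    using two_le_s q_pos by (cases q) (auto simp: algebra_simps)
  ultimately have "last (run up 0) = Suc (hd (run up (s - 1)))"
    using assms(1,2) by (simp add: hd_run last_run)
  then show ?thesis
    by (simp add: linked_def)
qed

lemma successively_linked_upt:
  assumes "\<And>i. a \<le> i \<Longrightarrow> Suc i < b \<Longrightarrow> up (Suc i) \<longleftrightarrow> \<not> up i"
    and "\<And>i. a \<le> i \<Longrightarrow> Suc i < b \<Longrightarrow> up i \<Longrightarrow> j \<noteq> Suc i"
  shows "successively (linked up) [a..<b]"
proof (rule successively_upt)
  fix i assume i: "a \<le> i" "Suc i < b"
  show "linked up i (Suc i)"
  proof (cases "up i")
    case True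
    with assms i show ?thesis by (intro linked_top) auto
  next
    case False
    with assms i show ?thesis by (intro linked_bottom) auto
  qed
qed

lemma successively_linked_0_Cons_rev_upt:
  assumes "up 0" "\<not> up (s - 1)" "0 < j"
    and "\<And>i. 0 < i \<Longrightarrow> Suc i < s \<Longrightarrow> up (Suc i) \<longleftrightarrow> \<not> up i"
    and "\<And>i. 0 < i \<Longrightarrow> Suc i < s \<Longrightarrow> up (Suc i) \<Longrightarrow> j \<noteq> Suc i"
  shows "successively (linked up) (0 # rev [1..<s])"
proof (rule successively_0_Cons_rev_upt)
  show "linked up 0 (s - 1)"
    using assms(1-3) by (rule linked_wrap)
next
  fix i assume i: "0 < i" "Suc i < s"
  show "linked up (Suc i) i"
  proof (cases "up i")
    case True
    with assms(4) i show ?thesis by (intro linked_bottom) auto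
  next
    case False
    with assms(4,5) i show ?thesis by (intro linked_top) auto
  qed
qed (use two_le_s in simp)

lemma ham_path_snake_ascending:
  assumes "even j"
  shows "ham_path_from_0 (s * q + j)
           (replicate_mset (s - 1) 1 + replicate_mset (s * q + j - s) s) (snake even [0..<s])"
proof (rule ham_path_snake)
  show "successively (linked even) [0..<s]"
    using assms by (intro successively_linked_upt) auto
qed (use two_le_s in auto)

lemma ham_path_snake_descending:
  assumes "even s" "odd j"
  shows "ham_path_from_0 (s * q + j)
           (replicate_mset (s - 1) 1 + replicate_mset (s * q + j - s) s) (snake even (0 # rev [1..<s]))"
proof (rule ham_path_snake)
  show "successively (linked even) (0 # rev [1..<s])"
    using assms two_le_s by (intro successively_linked_0_Cons_rev_upt) (auto intro: gr0I)
qed (use two_le_s in auto)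

lemma ham_path_snake_descending_to_1:
  assumes "odd s" "even j" "0 < j"
  defines "up \<equiv> \<lambda>c. c = 0 \<or> odd c"
  shows "ham_path_from_0 (s * q + j)
           (replicate_mset (s - 1) 1 + replicate_mset (s * q + j - s) s) (snake up (0 # rev [1..<s]))"
    and "last (snake up (0 # rev [1..<s])) = s * q + 1"
proof -
  have "3 \<le> s"
    using assms(1) two_le_s by presburger
  show "ham_path_from_0 (s * q + j)
          (replicate_mset (s - 1) 1 + replicate_mset (s * q + j - s) s) (snake up (0 # rev [1..<s]))"
  proof (rule ham_path_snake)
    show "successively (linked up) (0 # rev [1..<s])"
      using assms \<open>3 \<le> s\<close> by (intro successively_linked_0_Cons_rev_upt) auto
  qed (use two_le_s assms in auto)
  have "1 < j"
    using assms(2,3) by (cases "j = 1") auto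
  then show "last (snake up (0 # rev [1..<s])) = s * q + 1"
    using last_snake[of "0 # rev [1..<s]" up] two_le_s
    by (simp add: last_rev last_run height_def up_def del: snake_Cons)
qed

lemma mset_exceptional_path:
  assumes "0 < j"
  shows "mset (0 # snake odd [1..<s] @ map ((*) s) [1..<Suc q]) = mset (snake odd [0..<s])"
proof -
  have "run odd 0 = rev (0 # map ((*) s) [1..<Suc q])"
    using assms by (simp add: run_def column_def height_def upt_conv_Cons del: upt_Suc)
  then show ?thesis
    using two_le_s by (simp add: upt_conv_Cons ac_simps del: upt_Suc)
qed

lemma ham_path_exceptional:
  assumes "odd s" "odd j"
  defines "Q \<equiv> 0 # snake odd [1..<s] @ map ((*) s) [1..<Suc q]"
  shows "ham_path_from_0 (s * q + j)
           (replicate_mset s 1 + replicate_mset (s * q + j - s - 1) s) Q"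
    and "last Q = s * q"
proof -
  let ?A = "snake odd [1..<s]" and ?B = "map ((*) s) [1..<Suc q]"
  have "3 \<le> s"
    using assms(1) two_le_s by presburger
  have "mset Q = mset (snake odd [0..<s])"
    unfolding Q_def using assms(2) by (intro mset_exceptional_path gr0I) auto
  moreover have "distinct (snake odd [0..<s])"
    by (rule distinct_snake) auto
  moreover have "set (snake odd [0..<s]) = {..<s * q + j}"
    by (rule set_snake_all) (simp add: atLeast0LessThan)
  ultimately have distinct: "distinct Q" and set: "set Q = {..<s * q + j}"
    by (metis mset_eq_imp_distinct_iff, metis mset_eq_setD)
  have "successively (linked odd) [1..<s]"
    using assms(2) by (intro successively_linked_upt) auto
  then obtain y where y: "path_lengths ?A = replicate_mset (s - 1 - 1) 1 + replicate_mset y s"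
    using path_lengths_snake[of odd "[1..<s]"] by auto
  have "hd ?A = 1" "last ?A = s - 1" "?A \<noteq> []"
    using \<open>3 \<le> s\<close> assms(1) by (simp_all add: hd_snake last_snake hd_run last_run)
  moreover have "hd ?B = s" "?B \<noteq> []"
    using q_pos by (simp_all add: upt_conv_Cons del: upt_Suc)
  ultimately have "path_lengths Q = add_mset 1 (path_lengths ?A + add_mset 1 (path_lengths ?B))"
    by (simp add: Q_def path_lengths_Cons path_lengths_append absdiff_def)
  also have "path_lengths ?B = replicate_mset (q - 1) s"
    using path_lengths_map_affine[of s 0 "[1..<Suc q]"] by (simp add: path_lengths_upt del: upt_Suc)
  finally have lengths: "path_lengths Q = replicate_mset s 1 + replicate_mset (y + (q - 1)) s"
    using \<open>3 \<le> s\<close> unfolding y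
    by (simp add: replicate_mset_add replicate_mset_eq_add_mset)
  have "length Q = s * q + j"
    using distinct_card[OF distinct] set by simp
  then have "y + (q - 1) = s * q + j - s - 1"
    using arg_cong[OF lengths, of size] by (simp add: size_path_lengths)
  with distinct set lengths show "ham_path_from_0 (s * q + j)
      (replicate_mset s 1 + replicate_mset (s * q + j - s - 1) s) Q"
    by (simp add: ham_path_from_0_def Q_def)
  show "last Q = s * q"
    using q_pos by (simp add: Q_def)
qed

end

lemma L12t_double:
  "add_mset 1 (image_mset ((*) 2)
      (replicate_mset a 1 + replicate_mset b s + (replicate_mset a' 1 + replicate_mset b' s))) =
    L12t (a + a') (2 * s) (b + b')"
  by (simp add: L12t_def replicate_mset_add numeral_2_eq_2 ac_simps)

lemma ham_path_0_1_L12t: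
  assumes "2 \<le> s" "j < s" "\<not> (odd s \<and> odd j)"
  shows "\<exists>xs. ham_path_0_1 ((2 * s - 2) + (2 * s * k + 2 * j) + 2)
                (L12t (2 * s - 2) (2 * s) (2 * s * k + 2 * j)) xs"
proof -
  interpret residue_columns s "Suc k" j
    using assms by unfold_locales auto
  let ?n = "s * Suc k + j"
  let ?L = "replicate_mset (s - 1) 1 + replicate_mset (?n - s) s"
  obtain P where P: "ham_path_from_0 ?n ?L P"
    using ham_path_snake_ascending ham_path_snake_descending assms(3) by (cases "even j") auto
  have "absdiff (2 * last P) (2 * last P + 1) = 1"
    by (simp add: absdiff_def)
  from ham_path_0_1_interleave[OF P P order.refl le_SucI[OF order.refl] this]
  obtain xs where "ham_path_0_1 (?n + ?n) (add_mset 1 (image_mset ((*) 2) (?L + ?L))) xs"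
    by blast
  moreover have "?n + ?n = (2 * s - 2) + (2 * s * k + 2 * j) + 2"
    using assms(1) by simp
  moreover have "(s - 1) + (s - 1) = 2 * s - 2" "(?n - s) + (?n - s) = 2 * s * k + 2 * j"
    using assms(1) by simp_all
  ultimately show ?thesis
    by (metis L12t_double)
qed

lemma ham_path_0_1_L12t_exceptional:
  assumes "odd s" "odd j" "j < s"
  shows "\<exists>xs. ham_path_0_1 ((2 * s - 1) + (2 * s * k + 2 * j) + 2)
                (L12t (2 * s - 1) (2 * s) (2 * s * k + 2 * j)) xs"
proof -
  have "Suc j < s"
    using assms by (metis Suc_lessI even_Suc)
  interpret long: residue_columns s "Suc k" "Suc j"
    using \<open>Suc j < s\<close> by unfold_locales auto
  interpret short: residue_columns s "Suc k" j
    using \<open>Suc j < s\<close> by unfold_locales auto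
  let ?n = "s * Suc k + j"
  let ?L = "replicate_mset (s - 1) 1 + replicate_mset (Suc ?n - s) s"
    and ?M = "replicate_mset s 1 + replicate_mset (?n - s - 1) s"
  obtain P where P: "ham_path_from_0 (Suc ?n) ?L P" and "last P = s * Suc k + 1"
    using long.ham_path_snake_descending_to_1 assms by fastforce
  obtain Q where Q: "ham_path_from_0 ?n ?M Q" and "last Q = s * Suc k"
    using short.ham_path_exceptional assms by blast
  have "absdiff (2 * last P) (2 * last Q + 1) = 1"
    using \<open>last P = _\<close> \<open>last Q = _\<close> by (simp add: absdiff_def)
  from ham_path_0_1_interleave[OF P Q le_SucI[OF order.refl] order.refl this]
  obtain xs where "ham_path_0_1 (Suc ?n + ?n) (add_mset 1 (image_mset ((*) 2) (?L + ?M))) xs"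
    by blast
  moreover have "Suc ?n + ?n = (2 * s - 1) + (2 * s * k + 2 * j) + 2"
    using \<open>Suc j < s\<close> by simp
  moreover have "(s - 1) + s = 2 * s - 1" "(Suc ?n - s) + (?n - s - 1) = 2 * s * k + 2 * j"
    using \<open>Suc j < s\<close> assms(2) by (simp_all add: odd_pos)
  ultimately show ?thesis
    by (metis L12t_double)
qed

theorem proposition3p9:
  fixes t k d b :: nat
  assumes "t \<ge> 4" and "even t" and "even d" and "d < t"
    and "if d mod 4 = 2 \<and> t mod 4 = 2 then b \<ge> t - 1 else b \<ge> t - 2"
  shows "\<exists>xs. special_linear_realization_2 (b + (t * k + d) + 2)
                (L12t b t (t * k + d)) xs"
proof -
  obtain s j where t: "t = 2 * s" and d: "d = 2 * j"
    using \<open>even t\<close> \<open>even d\<close> by (auto elim!: evenE)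
  have "2 \<le> s" "j < s"
    using assms(1,4) t d by auto
  have exceptional: "d mod 4 = 2 \<and> t mod 4 = 2 \<longleftrightarrow> odd s \<and> odd j"
    using t d by presburger
  obtain b' xs where "b' \<le> b" and "ham_path_0_1 (b' + (t * k + d) + 2) (L12t b' t (t * k + d)) xs"
  proof (cases "odd s \<and> odd j")
    case True
    with ham_path_0_1_L12t_exceptional[of s j k] \<open>j < s\<close> show ?thesis
      using that[of "2 * s - 1"] assms(5) exceptional t d by auto
  next
    case False
    with ham_path_0_1_L12t[of s j k] \<open>2 \<le> s\<close> \<open>j < s\<close> show ?thesis
      using that[of "2 * s - 2"] assms(5) exceptional t d by (auto split: if_splits)
  qed
  then obtain ys where "ham_path_0_1 (b + (t * k + d) + 2) (L12t b t (t * k + d)) ys"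
    using ham_path_0_1_L12t_mono by blast
  then show ?thesis
    using special_linear_realization_2_if_ham_path_0_1 by blast
qed

end
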